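(* Let $M$ be a monoid, and let $M^0$ be the monoid obtained from $M$ by adjoining a new element $0$ which acts as a zero element. Then $M$ is strongly hyperbolic if and only if $M^0$ is strongly hyperbolic.
   Context: Directed graphs may have loops and multiple edges; $d(u,v)$ is the length of a shortest directed path from $u$ to $v$ ($\infty$ if none). Out-ball $\overrightarrow{\mathcal{B}}_r(x)=\{y : d(x,y)\le r\}$, in-ball $\overleftarrow{\mathcal{B}}_r(x)=\{y : d(y,x)\le r\}$, extended to sets by union. A path $[x_0,\dots,x_n]$ is a geodesic if $n=d(x_0,x_n)$. A directed geodesic triangle is an ordered triple $(p,q,r)$ of geodesics with the end of $p$ equal to the start of $q$ and $p\circ q$ having the same start and end as $r$; it is $\delta$-thin if every vertex of $r$ lies in $\overrightarrow{\mathcal{B}}_\delta(p)\cup\overleftarrow{\mathcal{B}}_\delta(q)$, every vertex of $p$ lies in $\overrightarrow{\mathcal{B}}_\delta(r)\cup\overleftarrow{\mathcal{B}}_\delta(q)$, and every vertex of $q$ lies in $\overrightarrow{\mathcal{B}}_\delta(p)\cup\overleftarrow{\mathcal{B}}_\delta(r)$. A directed graph is strongly $\delta$-hyperbolic if all its directed geodesic triangles are $\delta$-thin. A monoid $M$ is strongly hyperbolic if there exist a finite generating set $A$ and $\delta\ge0$ such that its right Cayley graph w.r.t. $A$ (vertex set $M$, an edge $m\to n$ for each $a\in A$ with $ma=n$) is strongly $\delta$-hyperbolic. *)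

theory Defs
  imports Complex_Main "HOL-Library.Extended_Nat"
begin

text \<open>Only adjacency matters for vertex-paths, distances and geodesics, so a directed
  (multi)graph is represented by its edge relation E.\<close>

definition dpath :: "('v \<Rightarrow> 'v \<Rightarrow> bool) \<Rightarrow> 'v list \<Rightarrow> bool" where
  "dpath E xs \<longleftrightarrow> xs \<noteq> [] \<and> (\<forall>i. Suc i < length xs \<longrightarrow> E (xs ! i) (xs ! Suc i))"

definition ddist :: "('v \<Rightarrow> 'v \<Rightarrow> bool) \<Rightarrow> 'v \<Rightarrow> 'v \<Rightarrow> enat" where
  "ddist E u v =
     (if \<exists>xs. dpath E xs \<and> hd xs = u \<and> last xs = v
      then enat (LEAST n. \<exists>xs. dpath E xs \<and> hd xs = u \<and> last xs = v \<and> length xs = Suc n)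
      else \<infinity>)"

definition dist_le :: "enat \<Rightarrow> real \<Rightarrow> bool" where
  "dist_le d r \<longleftrightarrow> (\<exists>n. d = enat n \<and> real n \<le> r)"

definition out_ball :: "('v \<Rightarrow> 'v \<Rightarrow> bool) \<Rightarrow> real \<Rightarrow> 'v set \<Rightarrow> 'v set" where
  "out_ball E r S = {y. \<exists>x\<in>S. dist_le (ddist E x y) r}"

definition in_ball :: "('v \<Rightarrow> 'v \<Rightarrow> bool) \<Rightarrow> real \<Rightarrow> 'v set \<Rightarrow> 'v set" where
  "in_ball E r S = {y. \<exists>x\<in>S. dist_le (ddist E y x) r}"

definition geodesic :: "('v \<Rightarrow> 'v \<Rightarrow> bool) \<Rightarrow> 'v list \<Rightarrow> bool" where
  "geodesic E xs \<longleftrightarrow> dpath E xs \<and> enat (length xs - 1) = ddist E (hd xs) (last xs)"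

definition geodesic_triangle :: "('v \<Rightarrow> 'v \<Rightarrow> bool) \<Rightarrow> 'v list \<Rightarrow> 'v list \<Rightarrow> 'v list \<Rightarrow> bool" where
  "geodesic_triangle E p q r \<longleftrightarrow>
     geodesic E p \<and> geodesic E q \<and> geodesic E r \<and>
     last p = hd q \<and> hd r = hd p \<and> last r = last q"

definition thin_triangle :: "('v \<Rightarrow> 'v \<Rightarrow> bool) \<Rightarrow> real \<Rightarrow> 'v list \<Rightarrow> 'v list \<Rightarrow> 'v list \<Rightarrow> bool" where
  "thin_triangle E \<delta> p q r \<longleftrightarrow>
     set r \<subseteq> out_ball E \<delta> (set p) \<union> in_ball E \<delta> (set q) \<and>
     set p \<subseteq> out_ball E \<delta> (set r) \<union> in_ball E \<delta> (set q) \<and>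
     set q \<subseteq> out_ball E \<delta> (set p) \<union> in_ball E \<delta> (set r)"

definition strongly_hyperbolic_graph :: "('v \<Rightarrow> 'v \<Rightarrow> bool) \<Rightarrow> real \<Rightarrow> bool" where
  "strongly_hyperbolic_graph E \<delta> \<longleftrightarrow>
     (\<forall>p q r. geodesic_triangle E p q r \<longrightarrow> thin_triangle E \<delta> p q r)"

inductive_set generated :: "('m \<Rightarrow> 'm \<Rightarrow> 'm) \<Rightarrow> 'm \<Rightarrow> 'm set \<Rightarrow> 'm set"
  for mult :: "'m \<Rightarrow> 'm \<Rightarrow> 'm" and one :: 'm and A :: "'m set" where
  gen_one: "one \<in> generated mult one A"
| gen_step: "x \<in> generated mult one A \<Longrightarrow> a \<in> A \<Longrightarrow> mult x a \<in> generated mult one A"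

definition cayley :: "('m \<Rightarrow> 'm \<Rightarrow> 'm) \<Rightarrow> 'm set \<Rightarrow> 'm \<Rightarrow> 'm \<Rightarrow> bool" where
  "cayley mult A m n \<longleftrightarrow> (\<exists>a\<in>A. mult m a = n)"

definition strongly_hyperbolic_monoid :: "('m \<Rightarrow> 'm \<Rightarrow> 'm) \<Rightarrow> 'm \<Rightarrow> bool" where
  "strongly_hyperbolic_monoid mult one \<longleftrightarrow>
     (\<exists>A \<delta>. finite A \<and> generated mult one A = UNIV \<and> \<delta> \<ge> 0 \<and>
            strongly_hyperbolic_graph (cayley mult A) \<delta>)"

text \<open>M^0: adjoin a zero (represented by None) to the monoid M (elements Some m).\<close>

definition zero_mult :: "'a::monoid_mult option \<Rightarrow> 'a option \<Rightarrow> 'a option" where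
  "zero_mult x y = (case (x, y) of (Some a, Some b) \<Rightarrow> Some (a * b) | _ \<Rightarrow> None)"

end

theory Submission
  imports Defs
begin

text \<open>In the Cayley graph of \<open>M\<^sup>0\<close> the zero is a sink, so a path from one element of \<open>M\<close>
  to another never visits it: \<open>M\<close> sits in \<open>M\<^sup>0\<close> with the same distances, geodesics and balls.
  A geodesic triangle of \<open>M\<^sup>0\<close> therefore either avoids the zero, and is a triangle of \<open>M\<close>,
  or the zero lies on its last two sides; once the zero is a generator, every vertex is within
  distance 1 of it, so such a triangle is 1-thin.\<close>

lemma map_Some_the: "None \<notin> set xs \<Longrightarrow> map Some (map the xs) = xs"
  by (induction xs) auto

lemma dpath_Cons: "dpath E (x # xs) \<longleftrightarrow> xs = [] \<or> (E x (hd xs) \<and> dpath E xs)"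
  by (cases xs) (auto simp: dpath_def nth_Cons split: nat.splits)

lemma dpath_map: "dpath E (map f xs) \<longleftrightarrow> dpath (\<lambda>x y. E (f x) (f y)) xs"
  by (simp add: dpath_def)

lemma dpath_last_sink:
  assumes sink: "\<And>w. E z w \<Longrightarrow> w = z" and "dpath E xs" "z \<in> set xs"
  shows "last xs = z"
  using assms(2,3)
proof (induction xs)
  case (Cons x xs)
  show ?case
  proof (cases "xs = []")
    case False
    with Cons.prems have "E x (hd xs)" "dpath E xs" by (auto simp: dpath_Cons)
    moreover have "z \<in> set xs"
      using Cons.prems(2) sink \<open>E x (hd xs)\<close> False hd_in_set by fastforce
    ultimately show ?thesis using Cons.IH False by simp
  qed (use Cons.prems in simp)
qed simp

lemma ddist_le_length: "dpath E xs \<Longrightarrow> ddist E (hd xs) (last xs) \<le> enat (length xs - 1)"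
proof -
  assume xs: "dpath E xs"
  then have "xs \<noteq> []" by (simp add: dpath_def)
  with xs have "(LEAST n. \<exists>ys. dpath E ys \<and> hd ys = hd xs \<and> last ys = last xs \<and>
      length ys = Suc n) \<le> length xs - 1"
    by (intro Least_le) auto
  with xs show ?thesis by (auto simp: ddist_def)
qed

lemma dist_le_if_ddist_le: "d \<le> enat n \<Longrightarrow> real n \<le> r \<Longrightarrow> dist_le d r"
  by (cases d) (auto simp: dist_le_def)

lemma geodesic_nonempty: "geodesic E xs \<Longrightarrow> xs \<noteq> []"
  by (simp add: geodesic_def dpath_def)

lemma thin_triangle_mono: "thin_triangle E \<delta> p q r \<Longrightarrow> \<delta> \<le> \<delta>' \<Longrightarrow> thin_triangle E \<delta>' p q r"
  unfolding thin_triangle_def out_ball_def in_ball_def dist_le_def by fastforce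

context
  fixes E :: "'a option \<Rightarrow> 'a option \<Rightarrow> bool"
  assumes None_sink: "\<And>z. E None z \<Longrightarrow> z = None"
begin

lemma ex_dpath_Some_iff:
  "(\<exists>xs. dpath E xs \<and> hd xs = Some x \<and> last xs = Some y \<and> length xs = k) \<longleftrightarrow>
   (\<exists>xs. dpath (\<lambda>m n. E (Some m) (Some n)) xs \<and> hd xs = x \<and> last xs = y \<and> length xs = k)"
proof
  assume "\<exists>xs. dpath E xs \<and> hd xs = Some x \<and> last xs = Some y \<and> length xs = k"
  then obtain xs where xs: "dpath E xs" "hd xs = Some x" "last xs = Some y" "length xs = k"
    by blast
  have "None \<notin> set xs" using dpath_last_sink[OF None_sink xs(1)] xs(3) by auto
  then have "map Some (map the xs) = xs" by (rule map_Some_the)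
  moreover have "xs \<noteq> []" using xs(1) by (simp add: dpath_def)
  ultimately show "\<exists>xs. dpath (\<lambda>m n. E (Some m) (Some n)) xs \<and> hd xs = x \<and> last xs = y \<and>
      length xs = k"
    using xs by (intro exI[of _ "map the xs"]) (metis dpath_map hd_map last_map length_map
        option.sel)
next
  assume "\<exists>xs. dpath (\<lambda>m n. E (Some m) (Some n)) xs \<and> hd xs = x \<and> last xs = y \<and> length xs = k"
  then obtain xs where "dpath (\<lambda>m n. E (Some m) (Some n)) xs" "hd xs = x" "last xs = y"
    "length xs = k" by blast
  moreover from this have "xs \<noteq> []" by (simp add: dpath_def)
  ultimately show "\<exists>xs. dpath E xs \<and> hd xs = Some x \<and> last xs = Some y \<and> length xs = k"
    by (intro exI[of _ "map Some xs"]) (simp add: dpath_map hd_map last_map)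
qed

lemma ddist_Some: "ddist E (Some x) (Some y) = ddist (\<lambda>m n. E (Some m) (Some n)) x y"
proof -
  have "(\<exists>xs. dpath E xs \<and> hd xs = Some x \<and> last xs = Some y) \<longleftrightarrow>
      (\<exists>xs. dpath (\<lambda>m n. E (Some m) (Some n)) xs \<and> hd xs = x \<and> last xs = y)"
    using ex_dpath_Some_iff by blast
  then show ?thesis unfolding ddist_def ex_dpath_Some_iff by simp
qed

lemma geodesic_map_Some: "geodesic E (map Some xs) \<longleftrightarrow> geodesic (\<lambda>m n. E (Some m) (Some n)) xs"
  by (cases "xs = []") (auto simp: geodesic_def dpath_def hd_map last_map ddist_Some)

lemma geodesic_triangle_map_Some:
  "geodesic_triangle E (map Some p) (map Some q) (map Some r) \<longleftrightarrow>
   geodesic_triangle (\<lambda>m n. E (Some m) (Some n)) p q r"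
  unfolding geodesic_triangle_def geodesic_map_Some
  using geodesic_nonempty[of "\<lambda>m n. E (Some m) (Some n)"] by (auto simp: hd_map last_map)

lemma thin_triangle_map_Some:
  "thin_triangle E \<delta> (map Some p) (map Some q) (map Some r) \<longleftrightarrow>
   thin_triangle (\<lambda>m n. E (Some m) (Some n)) \<delta> p q r"
proof -
  have balls: "Some y \<in> out_ball E \<delta> (Some ` S) \<longleftrightarrow> y \<in> out_ball (\<lambda>m n. E (Some m) (Some n)) \<delta> S"
    "Some y \<in> in_ball E \<delta> (Some ` S) \<longleftrightarrow> y \<in> in_ball (\<lambda>m n. E (Some m) (Some n)) \<delta> S" for y S
    by (auto simp: out_ball_def in_ball_def ddist_Some)
  have "Some ` R \<subseteq> out_ball E \<delta> (Some ` P) \<union> in_ball E \<delta> (Some ` Q) \<longleftrightarrow>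
      R \<subseteq> out_ball (\<lambda>m n. E (Some m) (Some n)) \<delta> P \<union> in_ball (\<lambda>m n. E (Some m) (Some n)) \<delta> Q"
    for R P Q using balls by blast
  then show ?thesis unfolding thin_triangle_def by simp
qed

lemma strongly_hyperbolic_graph_restrict_Some:
  "strongly_hyperbolic_graph E \<delta> \<Longrightarrow> strongly_hyperbolic_graph (\<lambda>m n. E (Some m) (Some n)) \<delta>"
  unfolding strongly_hyperbolic_graph_def
  by (metis geodesic_triangle_map_Some thin_triangle_map_Some)

lemma strongly_hyperbolic_graph_adjoin_sink:
  assumes to_None: "\<And>v. E v None"
    and hyp: "strongly_hyperbolic_graph (\<lambda>m n. E (Some m) (Some n)) \<delta>"
  shows "strongly_hyperbolic_graph E (max \<delta> 1)"
  unfolding strongly_hyperbolic_graph_def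
proof (intro allI impI)
  fix p q r
  assume T: "geodesic_triangle E p q r"
  then have paths: "dpath E p" "dpath E q" "dpath E r"
    and ends: "last p = hd q" "hd r = hd p" "last r = last q"
    and nonempty: "q \<noteq> []" "r \<noteq> []"
    by (auto simp: geodesic_triangle_def geodesic_def dpath_def)
  show "thin_triangle E (max \<delta> 1) p q r"
  proof (cases "None \<in> set p \<union> set q \<union> set r")
    case True
    have "last p = None" if "None \<in> set p" using dpath_last_sink[OF None_sink paths(1) that] .
    moreover have "last r = None" if "None \<in> set r" using dpath_last_sink[OF None_sink paths(3) that] .
    ultimately have "None \<in> set q"
      using True ends hd_in_set[OF nonempty(1)] last_in_set[OF nonempty(1)] by auto
    then have "last r = None" using dpath_last_sink[OF None_sink paths(2)] ends(3) by simp
    then have None_qr: "None \<in> set q" "None \<in> set r"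
      using \<open>None \<in> set q\<close> last_in_set[OF nonempty(2)] by auto
    have "ddist E v None \<le> enat 1" for v
      using ddist_le_length[of E "[v, None]"] to_None by (simp add: dpath_Cons)
    then have "v \<in> in_ball E (max \<delta> 1) S" if "None \<in> S" for v S
      using that dist_le_if_ddist_le[of _ 1 "max \<delta> 1"] by (auto simp: in_ball_def)
    with None_qr show ?thesis unfolding thin_triangle_def by blast
  next
    case False
    then obtain p' q' r' where p'q'r': "p = map Some p'" "q = map Some q'" "r = map Some r'"
      using map_Some_the by (metis UnCI)
    with T hyp have "thin_triangle (\<lambda>m n. E (Some m) (Some n)) \<delta> p' q' r'"
      by (simp add: geodesic_triangle_map_Some strongly_hyperbolic_graph_def)
    then have "thin_triangle E \<delta> p q r" using p'q'r' by (simp add: thin_triangle_map_Some)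
    then show ?thesis by (rule thin_triangle_mono) simp
  qed
qed

end

lemma zero_mult_simps [simp]:
  "zero_mult (Some a) (Some b) = Some (a * b)" "zero_mult None y = None" "zero_mult x None = None"
  by (simp_all add: zero_mult_def split: option.splits)

lemma cayley_zero_mult_Some:
  "cayley zero_mult B (Some m) (Some n) \<longleftrightarrow> cayley (*) {a. Some a \<in> B} m n"
  by (auto simp: cayley_def zero_mult_def split: option.splits)

lemma cayley_zero_mult_None: "cayley zero_mult B None z \<Longrightarrow> z = None"
  by (auto simp: cayley_def zero_mult_def)

lemma cayley_zero_mult_to_None: "None \<in> B \<Longrightarrow> cayley zero_mult B v None"
  unfolding cayley_def by (intro bexI[of _ None]) simp_all

lemma generated_zero_mult_Some:
  "Some a \<in> generated zero_mult (Some 1) B \<Longrightarrow> a \<in> generated (*) 1 {a. Some a \<in> B}"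
proof (induction "Some a" arbitrary: a rule: generated.induct)
  case gen_one
  then show ?case by (auto intro: generated.gen_one)
next
  case (gen_step x b)
  then obtain c d where "x = Some c" "b = Some d" "a = c * d"
    by (auto simp: zero_mult_def split: option.splits)
  with gen_step show ?case by (auto intro: generated.gen_step)
qed

lemma generated_zero_mult_insert_None:
  assumes "generated (*) 1 A = UNIV"
  shows "generated zero_mult (Some 1) (insert None (Some ` A)) = UNIV"
proof -
  have Some_mem: "Some x \<in> generated zero_mult (Some 1) (insert None (Some ` A))"
    if "x \<in> generated (*) 1 A" for x
    using that
  proof (induction x rule: generated.induct)
    case (gen_step x a)
    then have "zero_mult (Some x) (Some a) \<in> generated zero_mult (Some 1) (insert None (Some ` A))"
      by (intro generated.gen_step) auto
    then show ?case by simp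
  qed (rule generated.gen_one)
  have "zero_mult (Some 1) None \<in> generated zero_mult (Some (1::'a)) (insert None (Some ` A))"
    by (intro generated.gen_step generated.gen_one) simp
  then have None_mem: "None \<in> generated zero_mult (Some (1::'a)) (insert None (Some ` A))"
    by simp
  have "x \<in> generated zero_mult (Some 1) (insert None (Some ` A))" for x
    using None_mem Some_mem assms by (cases x) auto
  then show ?thesis by blast
qed

lemma strongly_hyperbolic_monoid_adjoin_zero:
  assumes "strongly_hyperbolic_monoid ((*) :: 'a::monoid_mult \<Rightarrow> 'a \<Rightarrow> 'a) 1"
  shows "strongly_hyperbolic_monoid zero_mult (Some (1::'a))"
proof -
  obtain A and \<delta> :: real where A: "finite A" "generated (*) (1::'a) A = UNIV" "\<delta> \<ge> 0"
    and hyp: "strongly_hyperbolic_graph (cayley (*) A) \<delta>"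
    using assms unfolding strongly_hyperbolic_monoid_def by blast
  define B where "B = insert None (Some ` A)"
  have "{a. Some a \<in> B} = A" by (auto simp: B_def)
  with hyp have "strongly_hyperbolic_graph (cayley zero_mult B) (max \<delta> 1)"
    by (intro strongly_hyperbolic_graph_adjoin_sink cayley_zero_mult_None cayley_zero_mult_to_None)
      (auto simp: B_def cayley_zero_mult_Some)
  moreover have "finite B" "generated zero_mult (Some 1) B = UNIV"
    using A by (simp_all add: B_def generated_zero_mult_insert_None)
  ultimately show ?thesis
    unfolding strongly_hyperbolic_monoid_def by (intro exI[of _ B] exI[of _ "max \<delta> 1"]) auto
qed

lemma strongly_hyperbolic_monoid_remove_zero:
  assumes "strongly_hyperbolic_monoid zero_mult (Some (1::'a::monoid_mult))"
  shows "strongly_hyperbolic_monoid ((*) :: 'a \<Rightarrow> 'a \<Rightarrow> 'a) 1"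
proof -
  obtain B and \<delta> :: real where B: "finite B" "generated zero_mult (Some (1::'a)) B = UNIV"
    "\<delta> \<ge> 0" and hyp: "strongly_hyperbolic_graph (cayley zero_mult B) \<delta>"
    using assms unfolding strongly_hyperbolic_monoid_def by blast
  have "finite {a. Some a \<in> B}" using finite_vimageI[OF B(1), of Some] by (simp add: vimage_def)
  moreover have "generated (*) 1 {a. Some a \<in> B} = UNIV"
    using generated_zero_mult_Some B(2) by blast
  moreover have "strongly_hyperbolic_graph (cayley (*) {a. Some a \<in> B}) \<delta>"
    using strongly_hyperbolic_graph_restrict_Some[OF cayley_zero_mult_None hyp]
    by (simp add: cayley_zero_mult_Some)
  ultimately show ?thesis unfolding strongly_hyperbolic_monoid_def using B(3) by blast
qed

theorem proposition4p7:
  shows "strongly_hyperbolic_monoid ((*) :: 'a::monoid_mult \<Rightarrow> 'a \<Rightarrow> 'a) 1 \<longleftrightarrow>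
         strongly_hyperbolic_monoid (zero_mult :: 'a option \<Rightarrow> 'a option \<Rightarrow> 'a option) (Some 1)"
  using strongly_hyperbolic_monoid_adjoin_zero strongly_hyperbolic_monoid_remove_zero by blast

end
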